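(* Let $s\in\mathbb{C}$ with $\Re(s)>1$. Let $0<q<1$ and, for each integer $r\ge1$, let $\alpha_r(s,q)\in\mathbb{C}$ be given. Suppose that there exist a bounded function $\chi:\mathbb{N}\to\mathbb{C}$ and constants $C>0$ and $\sigma>\Re(s)$ such that for all $q\in(0,1)$ and all integers $r\ge1$: (i) $\displaystyle \lim_{q\to1^-}\alpha_r(s,q)=\frac{\chi(r)}{r^{\,s}}$; (ii) $\displaystyle |\alpha_r(s,q)|\le C\,r^{-\sigma}$. Define, for each integer $n\ge1$, \[ \beta_n(s,q)=\sum_{r=1}^{n}\frac{q^r\,\alpha_r(s,q)}{(q;q)_{n-r}\,(q;q)_{n+r}}, \qquad T_n(s,q):=\frac{\sqrt{n}\,(2n)!\,(1-q)^{2n}\,\beta_n(s,q)}{4^n}. \] Then the iterated limit exists and \[ \lim_{n\to\infty}\lim_{q\to1^-}T_n(s,q)=\frac{L(s,\chi)}{\sqrt{\pi}},\qquad L(s,\chi):=\sum_{r=1}^\infty\frac{\chi(r)}{r^{\,s}}. \]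
   Context: For $0<q<1$ and an integer $m\ge0$, $(q;q)_m=\prod_{j=1}^{m}(1-q^j)$ denotes the $q$-Pochhammer symbol, with $(q;q)_0=1$. The inner limit $q\to1^-$ is taken for fixed $n$, and the outer limit $n\to\infty$ is taken afterwards. *)

theory Defs
  imports "HOL-Analysis.Analysis"
begin

definition qpoch :: "real \<Rightarrow> nat \<Rightarrow> real" where
  "qpoch q m = (\<Prod>j=1..m. 1 - q ^ j)"

text \<open>beta_n(s,q) for the given family alpha r q (s fixed).\<close>
definition beta_n :: "(nat \<Rightarrow> real \<Rightarrow> complex) \<Rightarrow> nat \<Rightarrow> real \<Rightarrow> complex" where
  "beta_n \<alpha> n q = (\<Sum>r=1..n. complex_of_real (q ^ r) * \<alpha> r q
       / complex_of_real (qpoch q (n - r) * qpoch q (n + r)))"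

definition T_n :: "(nat \<Rightarrow> real \<Rightarrow> complex) \<Rightarrow> nat \<Rightarrow> real \<Rightarrow> complex" where
  "T_n \<alpha> n q = complex_of_real (sqrt (real n) * fact (2*n) * (1 - q) ^ (2*n) / 4 ^ n)
       * beta_n \<alpha> n q"

definition L_series :: "(nat \<Rightarrow> complex) \<Rightarrow> complex \<Rightarrow> complex" where
  "L_series chi s = (\<Sum>r. chi (Suc r) / of_nat (Suc r) powr s)"

end

theory Submission
  imports Defs "HOL-Real_Asymp.Real_Asymp"
begin

text \<open>
  Write \<open>(q;q)\<^sub>m = (1 - q)\<^sup>m [m]\<^sub>q!\<close> with the q-factorial \<open>[m]\<^sub>q! \<rightarrow> m!\<close> as \<open>q \<rightarrow> 1\<close>.
  Then the factor \<open>(1 - q)\<^sup>2\<^sup>n\<close> in \<open>T\<^sub>n\<close> cancels exactly, and the inner limit is the finite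
  sum over \<open>1 \<le> r \<le> n\<close> of \<open>w\<^sub>n(r) \<chi>(r) / r^s\<close> with the weights
  \<open>w\<^sub>n(r) = \<surd>n binom(2n, n + r) / 4\<^sup>n\<close>.  For fixed \<open>r\<close> these tend to \<open>1/\<surd>\<pi>\<close>: the central
  one by Euler's limit formula for \<open>\<Gamma>(1/2) = \<surd>\<pi>\<close>, the others because their ratio to the
  central one tends to 1.  They are all bounded by the central one, so Tannery's theorem,
  dominated by the convergent series of \<open>|\<chi>(r)| / r^Re s\<close>, gives the outer limit.
\<close>

definition qfact :: "real \<Rightarrow> nat \<Rightarrow> real" where
  "qfact q m = (\<Prod>j=1..m. \<Sum>i<j. q ^ i)"

lemma qpoch_eq_qfact: "qpoch q m = (1 - q) ^ m * qfact q m"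
proof -
  have "qpoch q m = (\<Prod>j=1..m. (1 - q) * (\<Sum>i<j. q ^ i))"
    unfolding qpoch_def by (intro prod.cong refl) (rule one_diff_power_eq)
  then show ?thesis
    by (simp add: prod.distrib qfact_def)
qed

lemma qfact_pos: "0 < q \<Longrightarrow> 0 < qfact q m"
  unfolding qfact_def by (intro prod_pos sum_pos) (auto simp: lessThan_empty_iff)

lemma tendsto_qfact [tendsto_intros]:
  "(f \<longlongrightarrow> 1) F \<Longrightarrow> ((\<lambda>x. qfact (f x) m) \<longlongrightarrow> fact m) F"
  unfolding qfact_def fact_prod by (auto intro!: tendsto_eq_intros)

lemma sqrt_central_binomial_eq_Gamma_series:
  assumes "n > 0"
  shows "sqrt (real n) * real ((2*n) choose n) / 4 ^ n
    = real n / (real n + 1/2) / Gamma_series (1/2 :: real) n"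
proof -
  have sqrt_n: "exp (ln (real n) / 2) = sqrt (real n)"
    using assms by (simp add: sqrt_def root_powr_inverse powr_def)
  have "real ((2*n) choose n) = fact (2*n) / (fact n * fact n)"
    by (simp add: binomial_fact)
  also have "\<dots> = 4 ^ n * pochhammer (1/2) n / fact n"
    by (simp add: fact_double power_mult)
  finally have binom: "sqrt (real n) * real ((2*n) choose n) / 4 ^ n
      = sqrt (real n) * pochhammer (1/2) n / fact n"
    by simp
  have "Gamma_series (1/2 :: real) n
      = fact n * sqrt (real n) / (pochhammer (1/2) n * (real n + 1/2))"
    unfolding Gamma_series_def by (simp add: pochhammer_Suc sqrt_n add.commute)
  moreover have "x / h / (a / (p * h)) = x * p / a" if "h \<noteq> 0" for x h a p :: real
    using that by (simp add: divide_simps)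
  ultimately have "real n / (real n + 1/2) / Gamma_series (1/2 :: real) n
      = real n * pochhammer (1/2) n / (fact n * sqrt (real n))"
    by simp
  also have "\<dots> = sqrt (real n) * pochhammer (1/2) n / fact n"
    using assms by (simp add: divide_simps)
  finally show ?thesis
    unfolding binom ..
qed

lemma LIMSEQ_sqrt_central_binomial:
  "(\<lambda>n. sqrt (real n) * real ((2*n) choose n) / 4 ^ n) \<longlonglongrightarrow> 1 / sqrt pi"
proof -
  have "(\<lambda>n. real n / (real n + 1/2) / Gamma_series (1/2 :: real) n) \<longlonglongrightarrow> 1 / sqrt pi"
  proof (rule tendsto_divide)
    show "(\<lambda>n. real n / (real n + 1/2)) \<longlonglongrightarrow> 1"
      by real_asymp
    show "Gamma_series (1/2 :: real) \<longlonglongrightarrow> sqrt pi"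
      using Gamma_series_LIMSEQ[of "1/2 :: real"] by (simp add: Gamma_one_half_real)
  qed simp
  moreover have "eventually (\<lambda>n. real n / (real n + 1/2) / Gamma_series (1/2 :: real) n
      = sqrt (real n) * real ((2*n) choose n) / 4 ^ n) sequentially"
    using eventually_gt_at_top[of 0]
    by eventually_elim (rule sqrt_central_binomial_eq_Gamma_series[symmetric])
  ultimately show ?thesis
    by (rule Lim_transform_eventually)
qed

lemma central_binomial_shift_eq_prod:
  assumes "r \<le> n"
  shows "real ((2*n) choose (n + r))
    = real ((2*n) choose n) * (\<Prod>k<r. (real n - real k) / (real n + real k + 1))"
  using assms
proof (induction r)
  case (Suc r)
  have "(n - r) * ((2*n) choose (n + r)) = Suc (n + r) * ((2*n) choose Suc (n + r))"
    by (metis add_diff_cancel_left binomial_absorb_comp binomial_absorption mult_2)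
  then have "real (n - r) * real ((2*n) choose (n + r))
      = real (Suc (n + r)) * real ((2*n) choose Suc (n + r))"
    by (metis of_nat_mult)
  then have "(real n - real r) * real ((2*n) choose (n + r))
      = (real n + real r + 1) * real ((2*n) choose (n + Suc r))"
    using Suc.prems by (simp add: of_nat_diff)
  then have "real ((2*n) choose (n + Suc r))
      = real ((2*n) choose (n + r)) * ((real n - real r) / (real n + real r + 1))"
    by (simp add: field_simps)
  then show ?case
    using Suc by simp
qed simp

definition binom_weight :: "nat \<Rightarrow> nat \<Rightarrow> real" where
  "binom_weight n r = sqrt (real n) * real ((2*n) choose (n + r)) / 4 ^ n"

lemma binom_weight_fact:
  "r \<le> n \<Longrightarrow> binom_weight n r = sqrt (real n) * fact (2*n) / 4 ^ n / (fact (n - r) * fact (n + r))"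
  unfolding binom_weight_def by (simp add: binomial_fact diff_add_eq_diff_diff_swap mult.commute)

lemma binom_weight_eq_0: "n < r \<Longrightarrow> binom_weight n r = 0"
  by (simp add: binom_weight_def)

lemma binom_weight_nonneg: "0 \<le> binom_weight n r"
  by (simp add: binom_weight_def)

lemma binom_weight_le_central: "binom_weight n r \<le> binom_weight n 0"
  unfolding binom_weight_def
  by (intro divide_right_mono mult_left_mono) (simp_all add: binomial_maximum')

lemma LIMSEQ_binom_weight: "(\<lambda>n. binom_weight n r) \<longlonglongrightarrow> 1 / sqrt pi"
proof -
  have "(\<lambda>n. sqrt (real n) * real ((2*n) choose n) / 4 ^ n
      * (\<Prod>k<r. (real n - real k) / (real n + real k + 1))) \<longlonglongrightarrow> 1 / sqrt pi * (\<Prod>k<r. 1)"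
    by (intro tendsto_mult LIMSEQ_sqrt_central_binomial tendsto_prod) real_asymp
  moreover have "eventually (\<lambda>n. sqrt (real n) * real ((2*n) choose n) / 4 ^ n
      * (\<Prod>k<r. (real n - real k) / (real n + real k + 1)) = binom_weight n r) sequentially"
    using eventually_ge_at_top[of r]
    by eventually_elim (simp add: binom_weight_def central_binomial_shift_eq_prod)
  ultimately show ?thesis
    by (simp add: Lim_transform_eventually)
qed

lemma T_n_eq_qfact:
  assumes "0 < q" "q < 1"
  shows "T_n \<alpha> n q = (\<Sum>r=1..n. complex_of_real (sqrt (real n) * fact (2*n) / 4 ^ n * q ^ r
      / (qfact q (n - r) * qfact q (n + r))) * \<alpha> r q)"
  unfolding T_n_def beta_n_def sum_distrib_left
proof (intro sum.cong refl)
  fix r assume "r \<in> {1..n}"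
  then have "(1 - q) ^ (2*n) = (1 - q) ^ (n - r) * (1 - q) ^ (n + r)"
    by (simp add: mult_2 flip: power_add)
  moreover have "qfact q (n - r) \<noteq> 0" "qfact q (n + r) \<noteq> 0"
    using qfact_pos[OF assms(1)] by (metis less_irrefl)+
  ultimately have coeff: "sqrt (real n) * fact (2*n) * (1 - q) ^ (2*n) / 4 ^ n * q ^ r
        / (qpoch q (n - r) * qpoch q (n + r))
      = sqrt (real n) * fact (2*n) / 4 ^ n * q ^ r / (qfact q (n - r) * qfact q (n + r))"
    using assms by (simp add: qpoch_eq_qfact)
  have of_real_factor: "complex_of_real x * (complex_of_real y * z / complex_of_real u)
      = complex_of_real (x * y / u) * z" for x y u z
    by (simp add: mult_ac)
  show "complex_of_real (sqrt (real n) * fact (2*n) * (1 - q) ^ (2*n) / 4 ^ n)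
      * (complex_of_real (q ^ r) * \<alpha> r q / complex_of_real (qpoch q (n - r) * qpoch q (n + r)))
    = complex_of_real (sqrt (real n) * fact (2*n) / 4 ^ n * q ^ r
      / (qfact q (n - r) * qfact q (n + r))) * \<alpha> r q"
    by (simp only: of_real_factor coeff)
qed

lemma tendsto_T_n:
  assumes "\<And>r. r \<in> {1..n} \<Longrightarrow> ((\<lambda>q. \<alpha> r q) \<longlongrightarrow> a r) (at_left 1)"
  shows "((\<lambda>q. T_n \<alpha> n q) \<longlongrightarrow> (\<Sum>r=1..n. complex_of_real (binom_weight n r) * a r)) (at_left 1)"
proof -
  define c where "c = sqrt (real n) * fact (2*n) / 4 ^ n"
  have "((\<lambda>q. \<Sum>r=1..n. complex_of_real (c * q ^ r / (qfact q (n - r) * qfact q (n + r))) * \<alpha> r q)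
      \<longlongrightarrow> (\<Sum>r=1..n. complex_of_real (c * 1 ^ r / (fact (n - r) * fact (n + r))) * a r))
      (at_left 1)"
    by (intro tendsto_intros assms) auto
  moreover have "(\<Sum>r=1..n. complex_of_real (c * 1 ^ r / (fact (n - r) * fact (n + r))) * a r)
      = (\<Sum>r=1..n. complex_of_real (binom_weight n r) * a r)"
    by (intro sum.cong refl) (simp add: binom_weight_fact c_def)
  moreover have "eventually (\<lambda>q. (\<Sum>r=1..n. complex_of_real
      (c * q ^ r / (qfact q (n - r) * qfact q (n + r))) * \<alpha> r q) = T_n \<alpha> n q) (at_left 1)"
    using eventually_at_left_real[OF zero_less_one]
    by eventually_elim (simp add: T_n_eq_qfact c_def)
  ultimately show ?thesis
    by (simp add: Lim_transform_eventually)
qed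

lemma tendsto_suminf_bounded_weights:
  fixes w :: "nat \<Rightarrow> nat \<Rightarrow> 'a :: {real_normed_algebra, banach}"
  assumes "summable (\<lambda>r. norm (a r))"
    and "\<And>r. (\<lambda>n. w n r) \<longlonglongrightarrow> c"
    and "\<And>n r. norm (w n r) \<le> B"
  shows "(\<lambda>n. \<Sum>r. w n r * a r) \<longlonglongrightarrow> c * suminf a"
proof -
  have "\<And>r. (\<lambda>n. w n r * a r) \<longlonglongrightarrow> c * a r"
    by (intro tendsto_mult_right assms(2))
  moreover have "eventually (\<lambda>(r, n). norm (w n r * a r) \<le> B * norm (a r))
      (sequentially \<times>\<^sub>F sequentially)"
    by (intro always_eventually allI)
      (auto intro: order_trans[OF norm_mult_ineq mult_right_mono] assms(3))
  moreover have "summable (\<lambda>r. B * norm (a r))"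
    using assms(1) by (rule summable_mult)
  ultimately have "(\<lambda>n. \<Sum>r. w n r * a r) \<longlonglongrightarrow> (\<Sum>r. c * a r)"
    using tannerys_theorem[of "\<lambda>r n. w n r * a r" "\<lambda>r. c * a r" sequentially
        "\<lambda>r. B * norm (a r)"]
    by simp
  then show ?thesis
    using assms(1) by (simp add: suminf_mult summable_norm_cancel)
qed

lemma LIMSEQ_binom_weight_sum:
  fixes a :: "nat \<Rightarrow> 'a :: {real_normed_algebra_1, banach}"
  assumes "summable (\<lambda>r. norm (a r))"
  shows "(\<lambda>n. \<Sum>r=1..n. of_real (binom_weight n r) * a r)
    \<longlonglongrightarrow> of_real (1 / sqrt pi) * (\<Sum>r. a (Suc r))"
proof -
  have "Bseq (\<lambda>n. binom_weight n 0)"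
    using LIMSEQ_binom_weight by (blast intro: convergent_imp_Bseq convergentI)
  then obtain B where B: "\<forall>n. norm (binom_weight n 0) \<le> B"
    by (rule BseqE)
  have "norm (of_real (binom_weight n (Suc r)) :: 'a) \<le> B" for n r
  proof -
    have "norm (of_real (binom_weight n (Suc r)) :: 'a) = binom_weight n (Suc r)"
      by (simp add: binom_weight_nonneg)
    also have "\<dots> \<le> binom_weight n 0"
      by (rule binom_weight_le_central)
    also have "\<dots> \<le> B"
      using B abs_ge_self order_trans by (metis real_norm_def)
    finally show ?thesis .
  qed
  moreover have "summable (\<lambda>r. norm (a (Suc r)))"
    using assms summable_Suc_iff[of "\<lambda>r. norm (a r)"] by simp
  ultimately have "(\<lambda>n. \<Sum>r. of_real (binom_weight n (Suc r)) * a (Suc r))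
      \<longlonglongrightarrow> of_real (1 / sqrt pi) * (\<Sum>r. a (Suc r))"
    by (intro tendsto_suminf_bounded_weights tendsto_of_real LIMSEQ_binom_weight)
  moreover have "(\<Sum>r. of_real (binom_weight n (Suc r)) * a (Suc r))
      = (\<Sum>r=1..n. of_real (binom_weight n r) * a r)" for n
  proof -
    have "(\<Sum>r. of_real (binom_weight n (Suc r)) * a (Suc r))
        = (\<Sum>r<n. of_real (binom_weight n (Suc r)) * a (Suc r))"
      by (rule suminf_finite) (auto simp: binom_weight_eq_0)
    also have "\<dots> = (\<Sum>r=1..n. of_real (binom_weight n r) * a r)"
      by (rule sum_bounds_lt_plus1)
    finally show ?thesis .
  qed
  ultimately show ?thesis
    by simp
qed

lemma summable_norm_bounded_div_powr:
  fixes chi :: "nat \<Rightarrow> complex"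
  assumes "bounded (range chi)" "1 < Re s"
  shows "summable (\<lambda>r. norm (chi r / of_nat r powr s))"
proof -
  obtain K where K: "\<And>r. norm (chi r) \<le> K"
    using assms(1) by (auto simp: bounded_iff)
  have "summable (\<lambda>r. K * real r powr (- Re s))"
    using assms(2) by (intro summable_mult) (simp add: summable_real_powr_iff)
  moreover have "norm (norm (chi r / of_nat r powr s)) \<le> K * real r powr (- Re s)" for r
    using K[of r] by (simp add: norm_divide norm_powr_real_powr powr_minus divide_right_mono
        divide_inverse[symmetric])
  ultimately show ?thesis
    by (rule summable_comparison_test'[where N = 0])
qed

theorem mainTheorem1:
  fixes s :: complex and \<alpha> :: "nat \<Rightarrow> real \<Rightarrow> complex" and chi :: "nat \<Rightarrow> complex"
    and C \<sigma> :: real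
  assumes "Re s > 1"
    and "bounded (range chi)"
    and "C > 0" and "\<sigma> > Re s"
    and lim: "\<And>r. r \<ge> 1 \<Longrightarrow> ((\<lambda>q. \<alpha> r q) \<longlongrightarrow> chi r / of_nat r powr s) (at_left 1)"
    and bnd: "\<And>r q. r \<ge> 1 \<Longrightarrow> 0 < q \<Longrightarrow> q < 1 \<Longrightarrow> norm (\<alpha> r q) \<le> C * real r powr (- \<sigma>)"
  shows "\<exists>f :: nat \<Rightarrow> complex.
           (\<forall>n\<ge>1. ((\<lambda>q. T_n \<alpha> n q) \<longlongrightarrow> f n) (at_left 1)) \<and>
           (f \<longlonglongrightarrow> L_series chi s / complex_of_real (sqrt pi))"
proof -
  define f where "f n = (\<Sum>r=1..n. of_real (binom_weight n r) * (chi r / of_nat r powr s))" for n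
  have "((\<lambda>q. T_n \<alpha> n q) \<longlongrightarrow> f n) (at_left 1)" for n
    unfolding f_def using lim by (intro tendsto_T_n) auto
  moreover have "f \<longlonglongrightarrow> of_real (1 / sqrt pi) * L_series chi s"
    unfolding f_def L_series_def
    by (rule LIMSEQ_binom_weight_sum[OF summable_norm_bounded_div_powr[OF assms(2,1)]])
  moreover have "of_real (1 / sqrt pi) * L_series chi s = L_series chi s / of_real (sqrt pi)"
    by (simp add: divide_inverse mult.commute)
  ultimately show ?thesis
    by (intro exI[of _ f]) simp
qed

end
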